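(* Let $E_0>0$ and let $\phi$ satisfy the standing assumptions below with $n\le3$. Then there exists $\delta>0$ such that for all $V\in(E_0-\delta,E_0)$, $\left|\frac{\xi_{1/2}(V)}{\xi_{-1/2}(V)}\cdot\frac{\zeta(V)}{\xi_{-1/2}(V)}\right|<\frac45$.
   Context: Standing assumptions on $\phi:(-\infty,1]\to\mathbb R_+$: $\phi(x)=0$ for $x<0$, $\phi$ analytic on $[0,1]$, and there is $n\in\{0,1,2,\dots\}$ with $\phi'(0)=\dots=\phi^{(n-1)}(0)=0$, $\phi^{(n)}(0)>0$. Put $\Phi(E)=\phi(1-E/E_0)$. For $\kappa\in\{\frac32,\frac12,-\frac12\}$ and $V\in(0,E_0]$: $\xi_\kappa(V)=\frac{4\pi}{V}\int_V^{E_0}\Phi(E)\left(\frac{E^2}{V^2}-1\right)^\kappa dE$. For $V\in(0,E_0)$: $\zeta(V)=-4\pi\frac{d}{dV}\left(\int_V^{E_0}\Phi(E)\left(\frac{E^2}{V^2}-1\right)^{-1/2}dE\right)$, so that $\xi_{-1/2}'(V)=-\frac1V(\xi_{-1/2}(V)+\zeta(V))$. *)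

theory Defs
  imports "HOL-Analysis.Analysis"
begin

definition real_analytic_on_set :: "(real \<Rightarrow> real) \<Rightarrow> real set \<Rightarrow> bool" where
  "real_analytic_on_set f S \<longleftrightarrow>
     (\<forall>x0\<in>S. \<exists>r>0. \<exists>a::nat \<Rightarrow> real.
        \<forall>x\<in>S. \<bar>x - x0\<bar> < r \<longrightarrow> (\<lambda>k. a k * (x - x0) ^ k) sums f x)"

text \<open>Standing assumptions on phi, with the order n of vanishing at 0.
  Higher derivatives are taken within [0,1] (phi jumps at 0 when n = 0):
  D k is the k-th derivative of phi restricted to [0,1].\<close>
definition standing_assms :: "(real \<Rightarrow> real) \<Rightarrow> nat \<Rightarrow> bool" where
  "standing_assms phi n \<longleftrightarrow>
     (\<forall>x\<le>1. 0 \<le> phi x) \<and>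
     (\<forall>x<0. phi x = 0) \<and>
     real_analytic_on_set phi {0..1} \<and>
     (\<exists>D :: nat \<Rightarrow> real \<Rightarrow> real.
        (\<forall>x\<in>{0..1}. D 0 x = phi x) \<and>
        (\<forall>k. \<forall>x\<in>{0..1}. (D k has_real_derivative D (Suc k) x) (at x within {0..1})) \<and>
        (\<forall>k<n. D k 0 = 0) \<and> D n 0 > 0)"

definition Phi :: "real \<Rightarrow> (real \<Rightarrow> real) \<Rightarrow> real \<Rightarrow> real" where
  "Phi E0 phi E = phi (1 - E / E0)"

text \<open>xi_kappa(V) = 4 pi / V * int_V^E0 Phi(E) (E^2/V^2 - 1)^kappa dE
  (an improper but absolutely convergent integral for kappa = -1/2).\<close>
definition xi :: "real \<Rightarrow> real \<Rightarrow> (real \<Rightarrow> real) \<Rightarrow> real \<Rightarrow> real" where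
  "xi kappa E0 phi V =
     4 * pi / V * integral {V..E0} (\<lambda>E. Phi E0 phi E * (E\<^sup>2 / V\<^sup>2 - 1) powr kappa)"

definition zeta :: "real \<Rightarrow> (real \<Rightarrow> real) \<Rightarrow> real \<Rightarrow> real" where
  "zeta E0 phi V =
     - 4 * pi * deriv (\<lambda>W. integral {W..E0} (\<lambda>E. Phi E0 phi E * (E\<^sup>2 / W\<^sup>2 - 1) powr (-1/2))) V"

end

theory Submission
  imports Defs
begin

text \<open>Substitute \<open>E = V + (E0 - V) t\<^sup>2\<close> and put \<open>a = 1 - V/E0\<close>. Then \<open>\<xi>\<^sub>-\<^sub>1\<^sub>/\<^sub>2\<close>,
  \<open>\<xi>\<^sub>1\<^sub>/\<^sub>2\<close> and \<open>\<zeta>\<close> become integrals over \<open>t \<in> [0,1]\<close> of \<open>\<phi>(a(1 - t\<^sup>2))\<close> against explicit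
  kernels. Writing \<open>\<phi>(s) = s\<^sup>n G(s)\<close> with \<open>G\<close> continuous and \<open>G(0) > 0\<close>, the common factor \<open>a\<^sup>n\<close>
  cancels from the ratio, which becomes a continuous function of \<open>a\<close> up to \<open>a = 0\<close>. There only
  the integrals \<open>\<integral>(1 - t\<^sup>2)\<^sup>n\<close> and \<open>\<integral>(1 - t\<^sup>2)\<^sup>n t\<^sup>2\<close> survive, and an integration by parts gives
  the limit \<open>(2n + 1)/(2n + 3)\<close>, which is below \<open>4/5\<close> exactly when \<open>n \<le> 3\<close>.\<close>

lemma continuous_on_Icc_extend_left:
  fixes f :: "real \<Rightarrow> real"
  assumes "a < b" and cont: "continuous_on {a<..b} f" and lim: "(f \<longlongrightarrow> L) (at_right a)"
  shows "continuous_on {a..b} (\<lambda>s. if s = a then L else f s)"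
  unfolding continuous_on_eq_continuous_within
proof
  fix x assume x: "x \<in> {a..b}"
  show "continuous (at x within {a..b}) (\<lambda>s. if s = a then L else f s)"
  proof (cases "x = a")
    case True
    have "((\<lambda>s. if s = a then L else f s) \<longlongrightarrow> L) (at_right a)"
      using lim by (rule tendsto_cong[THEN iffD1, rotated])
        (use \<open>a < b\<close> in \<open>auto simp: eventually_at_right_field intro!: exI[of _ b]\<close>)
    then show ?thesis
      using True \<open>a < b\<close> by (simp add: continuous_within at_within_Icc_at_right)
  next
    case False
    with x have "a < x" by auto
    have "at x within {a..b} = at x within {a<..b}"
      by (rule at_within_nhd[of _ "{a<..<b+1}"]) (use \<open>a < x\<close> x in auto)
    moreover have "continuous_on {a<..b} (\<lambda>s. if s = a then L else f s)"
      using cont by (rule continuous_on_eq) auto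
    ultimately show ?thesis
      using \<open>a < x\<close> x by (simp add: continuous_on_eq_continuous_within)
  qed
qed

lemma continuous_on_slice:
  fixes f :: "'a::topological_space \<Rightarrow> real \<Rightarrow> real"
  assumes "continuous_on (U \<times> {a..b}) (\<lambda>p. f (fst p) (snd p))" and "x \<in> U"
  shows "continuous_on {a..b} (f x)"
proof -
  have "continuous_on {a..b} (\<lambda>t. (\<lambda>p. f (fst p) (snd p)) (x, t))"
    by (rule continuous_on_compose2[OF assms(1)]) (use assms(2) in \<open>auto intro!: continuous_intros\<close>)
  then show ?thesis by simp
qed

lemma continuous_on_integral_Icc_param:
  fixes f :: "'a::topological_space \<Rightarrow> real \<Rightarrow> real"
  assumes "continuous_on (U \<times> {a..b}) (\<lambda>p. f (fst p) (snd p))"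
  shows "continuous_on U (\<lambda>x. integral {a..b} (f x))"
  using integral_continuous_on_param[of U a b f] assms by (simp add: case_prod_beta')

lemma integral_one_minus_square_power:
  "integral {0..1} (\<lambda>t::real. (1 - t^2)^n) = (2 * real n + 3) * integral {0..1} (\<lambda>t. (1 - t^2)^n * t^2)"
proof -
  let ?F = "\<lambda>t::real. t * (1 - t^2)^Suc n"
  let ?f = "\<lambda>t::real. (1 - t^2)^n - (2 * real n + 3) * ((1 - t^2)^n * t^2)"
  have "(?F has_real_derivative ?f t) (at t within {0..1})" for t
  proof -
    have "(?F has_real_derivative 1 * (1 - t^2)^Suc n + t * (real (Suc n) * (1 - t^2)^n * (0 - 2*t)))
        (at t within {0..1})"
      by (intro derivative_eq_intros) (auto simp: power2_eq_square)
    moreover have "1 * (1 - t^2)^Suc n + t * (real (Suc n) * (1 - t^2)^n * (0 - 2*t)) = ?f t"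
      by (simp add: algebra_simps power2_eq_square)
    ultimately show ?thesis by simp
  qed
  then have "(?f has_integral ?F 1 - ?F 0) {0..1}"
    by (intro fundamental_theorem_of_calculus) (auto simp: has_real_derivative_iff_has_vector_derivative)
  then have "integral {0..1} ?f = 0"
    by (simp add: integral_unique)
  moreover have "integral {0..1} ?f = integral {0..1} (\<lambda>t::real. (1 - t^2)^n)
      - (2 * real n + 3) * integral {0..1} (\<lambda>t. (1 - t^2)^n * t^2)"
    by (subst integral_diff) (auto intro!: integrable_continuous_interval continuous_intros)
  ultimately show ?thesis by simp
qed

lemma integral_one_minus_square_power_pos: "0 < integral {0..1} (\<lambda>t::real. (1 - t^2)^n)"
proof -
  let ?F = "\<lambda>t::real. - ((1 - t)^Suc n) / real (Suc n)"
  have "((\<lambda>t::real. (1 - t)^n) has_integral ?F 1 - ?F 0) {0..1}"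
  proof (rule fundamental_theorem_of_calculus)
    fix t :: real
    have "(?F has_real_derivative (1 - t)^n) (at t within {0..1})"
      by (rule derivative_eq_intros refl | simp)+
    then show "(?F has_vector_derivative (1 - t)^n) (at t within {0..1})"
      by (simp add: has_real_derivative_iff_has_vector_derivative)
  qed simp
  then have "integral {0..1} (\<lambda>t::real. (1 - t)^n) = 1 / real (Suc n)"
    by (simp add: integral_unique)
  moreover have "integral {0..1} (\<lambda>t::real. (1 - t)^n) \<le> integral {0..1} (\<lambda>t::real. (1 - t^2)^n)"
  proof (rule integral_le)
    fix t :: real assume t: "t \<in> {0..1}"
    then have "t * t \<le> t * 1" by (intro mult_left_mono) auto
    with t show "(1 - t)^n \<le> (1 - t^2)^n" by (intro power_mono) (auto simp: power2_eq_square)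
  qed (auto intro!: integrable_continuous_interval continuous_intros)
  ultimately show ?thesis
    by (smt (verit) divide_pos_pos of_nat_0_less_iff zero_less_Suc)
qed

lemma image_affine_square_Icc:
  fixes a b :: real
  assumes "a < b"
  shows "(\<lambda>t. a + (b - a) * t^2) ` {0..1} = {a..b}"
proof
  show "(\<lambda>t. a + (b - a) * t^2) ` {0..1} \<subseteq> {a..b}"
  proof (rule image_subsetI)
    fix t :: real assume "t \<in> {0..1}"
    then have "(b - a) * t^2 \<le> (b - a) * 1"
      using assms by (intro mult_left_mono) (auto simp: power_le_one)
    moreover have "0 \<le> (b - a) * t^2" using assms by simp
    ultimately show "a + (b - a) * t^2 \<in> {a..b}" by simp
  qed
  show "{a..b} \<subseteq> (\<lambda>t. a + (b - a) * t^2) ` {0..1}"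
  proof
    fix E assume E: "E \<in> {a..b}"
    then have q: "0 \<le> (E - a) / (b - a)" "(E - a) / (b - a) \<le> 1" using assms by auto
    then have "sqrt ((E - a) / (b - a)) \<in> {0..1}" by auto
    moreover have "E = a + (b - a) * (sqrt ((E - a) / (b - a)))^2" using q assms by simp
    ultimately show "E \<in> (\<lambda>t. a + (b - a) * t^2) ` {0..1}" by blast
  qed
qed

lemma integral_substitute_square:
  fixes f h :: "real \<Rightarrow> real"
  assumes "a < b" and h: "continuous_on {0..1} h"
    and eq: "\<And>t. 0 < t \<Longrightarrow> t \<le> 1 \<Longrightarrow> h t = 2 * (b - a) * t * f (a + (b - a) * t^2)"
  shows "integral {a..b} f = integral {0..1} h"
proof -
  define g where "g t = a + (b - a) * t^2" for t :: real
  define g' where "g' t = 2 * (b - a) * t" for t :: real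
  have der: "(g has_field_derivative g' t) (at t within {0..1})" for t
    unfolding g_def g'_def by (rule derivative_eq_intros refl | simp)+
  have inj: "inj_on g {0..1}"
    using \<open>a < b\<close> by (intro inj_onI) (auto simp: g_def power2_eq_iff_nonneg)
  have spike: "\<bar>g' t\<bar> * f (g t) = h t" if "t \<in> {0..1} - {0}" for t
    using that eq \<open>a < b\<close> by (auto simp: g_def g'_def)
  have "(\<lambda>t. \<bar>g' t\<bar> * f (g t)) absolutely_integrable_on {0..1}"
    by (rule absolutely_integrable_spike[OF absolutely_integrable_continuous_real[OF h] _ spike])
      (rule negligible_sing)
  moreover have "integral {0..1} (\<lambda>t. \<bar>g' t\<bar> * f (g t)) = integral {0..1} h"
    by (rule integral_spike[of "{0}"]) (use spike in auto)
  ultimately have "integral (g ` {0..1}) f = integral {0..1} h"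
    using has_absolute_integral_change_of_variables_1'[of "{0..1}" g g' f "integral {0..1} h"] der inj
    by auto
  then show ?thesis
    using image_affine_square_Icc[OF \<open>a < b\<close>] by (simp add: g_def[abs_def])
qed

lemma subst_param_bounds:
  fixes V E0 :: real
  assumes "0 < V" "V < E0"
  shows "0 < 1 - V/E0" "1 - V/E0 < 1"
  using assms by (auto simp: divide_less_eq)

lemma mult_one_minus_square_in_unit:
  fixes a t :: real
  assumes "0 \<le> a" "a \<le> 1" "0 \<le> t" "t \<le> 1"
  shows "a * (1 - t^2) \<in> {0..1}"
proof -
  have "t^2 \<le> 1" using assms by (simp add: power_le_one)
  then show ?thesis using assms by (auto simp: mult_le_one)
qed

text \<open>With \<open>E = V + (E0 - V) t\<^sup>2\<close> and \<open>a = 1 - V/E0\<close> one gets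
  \<open>E\<^sup>2/V\<^sup>2 - 1 = (E0 t/V)\<^sup>2 a subst_quad(a,t)\<close>.\<close>
definition subst_quad :: "real \<Rightarrow> real \<Rightarrow> real" where
  "subst_quad a t = 2 * (1 - a) + a * t^2"

lemma subst_quad_pos: "0 \<le> a \<Longrightarrow> a < 1 \<Longrightarrow> 0 \<le> t \<Longrightarrow> 0 < subst_quad a t"
  unfolding subst_quad_def by (smt (verit) mult_nonneg_nonneg zero_le_power2)

lemma Phi_kernel_substitution:
  fixes E0 V a t k :: real
  assumes "0 < E0" "0 < V" "V < E0" and a: "a = 1 - V/E0" and t: "0 < t"
  shows "2 * (E0 - V) * t * (Phi E0 phi (V + (E0 - V) * t^2) * ((V + (E0 - V) * t^2)^2 / V^2 - 1) powr k)
    = 2 * E0 * a * t * phi (a * (1 - t^2)) * (E0 * t * sqrt a * sqrt (subst_quad a t) / V) powr (2 * k)"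
proof -
  have Vr: "V = E0 * (1 - a)" using a \<open>0 < E0\<close> by (simp add: field_simps)
  have a0: "0 < a" "a < 1" using subst_param_bounds[OF \<open>0 < V\<close> \<open>V < E0\<close>] a by auto
  have Q: "0 < subst_quad a t" using a0 t by (intro subst_quad_pos) auto
  have "(V + (E0 - V) * t^2)^2 - V^2 = E0^2 * t^2 * a * subst_quad a t"
    unfolding Vr subst_quad_def by (simp add: algebra_simps power2_eq_square)
  moreover have "(V + (E0 - V) * t^2)^2 / V^2 - 1 = ((V + (E0 - V) * t^2)^2 - V^2) / V^2"
    using \<open>0 < V\<close> by (simp add: field_simps)
  ultimately have "(V + (E0 - V) * t^2)^2 / V^2 - 1 = E0^2 * t^2 * a * subst_quad a t / V^2"
    by simp
  also have "\<dots> = (E0 * t * sqrt a * sqrt (subst_quad a t) / V) powr 2"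
    using a0 Q \<open>0 < V\<close> t \<open>0 < E0\<close> by (simp add: power_mult_distrib power_divide)
  finally have "((V + (E0 - V) * t^2)^2 / V^2 - 1) powr k
      = (E0 * t * sqrt a * sqrt (subst_quad a t) / V) powr (2 * k)"
    by (simp add: powr_powr)
  moreover have "1 - (V + (E0 - V) * t^2) / E0 = a * (1 - t^2)" "E0 - V = E0 * a"
    using \<open>0 < E0\<close> unfolding Vr by (simp_all add: field_simps)
  ultimately show ?thesis unfolding Phi_def by simp
qed

lemma tendsto_at_right_of_continuous_on_Icc:
  fixes f :: "real \<Rightarrow> real"
  assumes "a < b" and "continuous_on {a..b} f"
  shows "(f \<longlongrightarrow> f a) (at_right a)"
proof -
  have "continuous (at a within {a..b}) f"
    using assms by (simp add: continuous_on_eq_continuous_within)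
  then show ?thesis using assms(1) by (simp add: continuous_within at_within_Icc_at_right)
qed

locale standing_phi =
  fixes phi :: "real \<Rightarrow> real" and n :: nat and D :: "nat \<Rightarrow> real \<Rightarrow> real"
  assumes D_0: "\<forall>x\<in>{0..1}. D 0 x = phi x"
    and D_deriv: "\<forall>k. \<forall>x\<in>{0..1}. (D k has_real_derivative D (Suc k) x) (at x within {0..1})"
    and D_vanish: "\<forall>k<n. D k 0 = 0"
    and D_order_pos: "D n 0 > 0"

lemma standing_assms_imp_standing_phi: "standing_assms phi n \<Longrightarrow> \<exists>D. standing_phi phi n D"
  unfolding standing_assms_def standing_phi_def by blast

context standing_phi
begin

lemma D_continuous: "continuous_on {0..1} (D k)"
  unfolding continuous_on_eq_continuous_within
  using D_deriv DERIV_continuous by blast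

lemma phi_continuous: "continuous_on {0..1} phi"
  using D_continuous[of 0] by (rule continuous_on_eq) (use D_0 in auto)

lemma phi_has_derivative:
  assumes "y \<in> {0..1}"
  shows "(phi has_real_derivative D 1 y) (at y within {0..1})"
proof -
  have "(D 0 has_real_derivative D 1 y) (at y within {0..1})" using D_deriv assms by simp
  then show ?thesis
    by (rule has_field_derivative_transform_within[OF _ zero_less_one assms]) (use D_0 in auto)
qed

lemma D_has_derivative_at:
  assumes "0 < s" "s < 1"
  shows "(D k has_real_derivative D (Suc k) s) (at s)"
proof -
  have "(D k has_real_derivative D (Suc k) s) (at s within {0<..<1})"
    by (rule has_field_derivative_subset[OF D_deriv[rule_format]]) (use assms in auto)
  moreover have "at s within {0<..<1} = at s" by (rule at_within_open) (use assms in auto)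
  ultimately show ?thesis by simp
qed

lemma D_tendsto_0: "(D k \<longlongrightarrow> D k 0) (at_right 0)"
  by (rule tendsto_at_right_of_continuous_on_Icc[OF _ D_continuous]) simp

lemma tendsto_D_div_power:
  "j \<le> n \<Longrightarrow> ((\<lambda>s. D (n - j) s / s^j) \<longlongrightarrow> D n 0 / fact j) (at_right 0)"
proof (induction j)
  case 0
  then show ?case using D_tendsto_0[of n] by simp
next
  case (Suc j)
  have nj: "n - j = Suc (n - Suc j)" using Suc.prems by auto
  have "((\<lambda>s. D (n - j) s / s^j) \<longlongrightarrow> D n 0 / fact j) (at_right 0)"
    using Suc by simp
  then have "((\<lambda>s. (D (n - j) s / s^j) / real (Suc j)) \<longlongrightarrow> (D n 0 / fact j) / real (Suc j)) (at_right 0)"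
    by (rule tendsto_divide[OF _ tendsto_const]) simp
  then have lim: "((\<lambda>s. D (n - j) s / (real (Suc j) * s^j)) \<longlongrightarrow> D n 0 / fact (Suc j)) (at_right 0)"
    by (simp add: field_simps)
  show ?case
  proof (rule lhopital_right_0[OF _ _ _ _ _ _ lim])
    show "(D (n - Suc j) \<longlongrightarrow> 0) (at_right 0)"
      using D_tendsto_0[of "n - Suc j"] D_vanish Suc.prems by auto
    show "((\<lambda>s. s ^ Suc j) \<longlongrightarrow> 0) (at_right (0::real))"
      by (rule tendsto_eq_intros refl | simp)+
    show "\<forall>\<^sub>F s in at_right 0. s ^ Suc j \<noteq> (0::real)"
      "\<forall>\<^sub>F s in at_right 0. real (Suc j) * s ^ j \<noteq> 0"
      "\<forall>\<^sub>F s in at_right 0. (D (n - Suc j) has_real_derivative D (n - j) s) (at s)"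
      unfolding eventually_at_right_field
      by (auto intro!: exI[of _ 1] D_has_derivative_at simp: nj)
    show "\<forall>\<^sub>F s in at_right 0. ((\<lambda>s. s ^ Suc j) has_real_derivative real (Suc j) * s ^ j) (at s)"
      by (intro always_eventually allI) (use DERIV_pow[of "Suc j"] in simp)
  qed
qed

text \<open>\<open>\<phi>(s) = s\<^sup>n phi_quot(s)\<close> and \<open>s \<phi>'(s) = s\<^sup>n dphi_quot(s)\<close>; the values at \<open>0\<close> are the
  limits that make both quotients continuous on \<open>[0,1]\<close>.\<close>
definition phi_lead :: real where "phi_lead = D n 0 / fact n"
definition phi_quot :: "real \<Rightarrow> real" where
  "phi_quot s = (if s = 0 then phi_lead else phi s / s^n)"
definition dphi_quot :: "real \<Rightarrow> real" where
  "dphi_quot s = (if s = 0 then real n * phi_lead else s * D 1 s / s^n)"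

lemma phi_lead_pos: "0 < phi_lead"
  using D_order_pos by (simp add: phi_lead_def)

lemma phi_quot_continuous: "continuous_on {0..1} phi_quot"
proof -
  have "((\<lambda>s. phi s / s^n) \<longlongrightarrow> phi_lead) (at_right 0)"
    using tendsto_D_div_power[of n] unfolding phi_lead_def
    by (rule tendsto_cong[THEN iffD1, rotated])
      (auto simp: eventually_at_right_field D_0 intro!: exI[of _ 1])
  then show ?thesis unfolding phi_quot_def[abs_def]
    by (intro continuous_on_Icc_extend_left continuous_intros
        continuous_on_subset[OF phi_continuous]) auto
qed

lemma dphi_quot_continuous: "continuous_on {0..1} dphi_quot"
proof -
  have "((\<lambda>s. s * D 1 s / s^n) \<longlongrightarrow> real n * phi_lead) (at_right 0)"
  proof (cases n)
    case 0
    have "((\<lambda>s. s * D 1 s) \<longlongrightarrow> 0 * D 1 0) (at_right 0)"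
      by (intro tendsto_intros D_tendsto_0)
    then show ?thesis using 0 by simp
  next
    case (Suc m)
    have "fact n = real n * (fact m :: real)" "n \<noteq> 0" using Suc by simp_all
    then have "D n 0 / fact m = real n * phi_lead"
      unfolding phi_lead_def by simp
    then have "((\<lambda>s. D (n - m) s / s^m) \<longlongrightarrow> real n * phi_lead) (at_right 0)"
      using tendsto_D_div_power[of m] Suc by simp
    then show ?thesis
      by (rule tendsto_cong[THEN iffD1, rotated])
        (auto simp: eventually_at_right_field Suc intro!: exI[of _ 1])
  qed
  then show ?thesis unfolding dphi_quot_def[abs_def]
    by (intro continuous_on_Icc_extend_left continuous_intros
        continuous_on_subset[OF D_continuous]) auto
qed

lemma phi_eq_power_mult_quot:
  assumes "s \<in> {0..1}"
  shows "phi s = s^n * phi_quot s"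
proof (cases "s = 0")
  case True
  have "phi 0 = 0^n * phi_lead"
  proof (cases "n = 0")
    case True
    then have "phi_lead = phi 0" "0^n = (1::real)" unfolding phi_lead_def using D_0 by simp_all
    then show ?thesis by simp
  next
    case False
    then show ?thesis using D_0 D_vanish by force
  qed
  then show ?thesis using True by (simp add: phi_quot_def)
qed (simp add: phi_quot_def)

lemma D1_eq_power_mult_quot:
  assumes "s \<in> {0..1}"
  shows "s * D 1 s = s^n * dphi_quot s"
  by (cases "s = 0") (auto simp: dphi_quot_def zero_power)

text \<open>After the substitution, \<open>\<xi>\<^sub>-\<^sub>1\<^sub>/\<^sub>2\<close> is a multiple of \<open>P a\<close>, \<open>dP\<close> is the
  \<open>a\<close>-derivative of \<open>P\<close>, and \<open>Pr\<close>, \<open>Sr\<close>, \<open>Tr\<close> are \<open>P a\<close>, the \<open>\<xi>\<^sub>1\<^sub>/\<^sub>2\<close>-integral and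
  \<open>a \<cdot> dP a\<close> with the factor \<open>a\<^sup>n\<close> removed; these stay continuous up to \<open>a = 0\<close>.\<close>
definition P_integrand where
  "P_integrand a t = phi (a * (1 - t^2)) / sqrt (subst_quad a t)"
definition dP_integrand where
  "dP_integrand a t = (1 - t^2) * D 1 (a * (1 - t^2)) / sqrt (subst_quad a t)
     - phi (a * (1 - t^2)) * (t^2 - 2) / (2 * subst_quad a t * sqrt (subst_quad a t))"
definition Pr_integrand where
  "Pr_integrand a t = (1 - t^2)^n * phi_quot (a * (1 - t^2)) / sqrt (subst_quad a t)"
definition Sr_integrand where
  "Sr_integrand a t = (1 - t^2)^n * phi_quot (a * (1 - t^2)) * t^2 * sqrt (subst_quad a t)"
definition Tr_integrand where
  "Tr_integrand a t = (1 - t^2)^n * dphi_quot (a * (1 - t^2)) / sqrt (subst_quad a t)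
     - a * ((1 - t^2)^n * phi_quot (a * (1 - t^2))) * (t^2 - 2)
         / (2 * subst_quad a t * sqrt (subst_quad a t))"

definition P where "P a = integral {0..1} (P_integrand a)"
definition dP where "dP a = integral {0..1} (dP_integrand a)"
definition Pr where "Pr a = integral {0..1} (Pr_integrand a)"
definition Sr where "Sr a = integral {0..1} (Sr_integrand a)"
definition Tr where "Tr a = integral {0..1} (Tr_integrand a)"

lemma continuous_on_compose_subst:
  fixes h :: "real \<Rightarrow> real" and S :: "(real \<times> real) set"
  assumes h: "continuous_on {0..1} h" and S: "S \<subseteq> {0..1} \<times> {0..1}"
  shows "continuous_on S (\<lambda>p. h (fst p * (1 - (snd p)^2)))"
proof (rule continuous_on_compose2[OF h])
  show "continuous_on S (\<lambda>p. fst p * (1 - (snd p)^2))" by (intro continuous_intros)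
  show "(\<lambda>p. fst p * (1 - (snd p)^2)) ` S \<subseteq> {0..1}"
    using S by (auto intro!: mult_one_minus_square_in_unit)
qed

lemma integrands_continuous:
  assumes S: "S \<subseteq> {0..<1} \<times> {0..1}"
  shows "continuous_on S (\<lambda>p. P_integrand (fst p) (snd p))"
    and "continuous_on S (\<lambda>p. dP_integrand (fst p) (snd p))"
    and "continuous_on S (\<lambda>p. Pr_integrand (fst p) (snd p))"
    and "continuous_on S (\<lambda>p. Sr_integrand (fst p) (snd p))"
    and "continuous_on S (\<lambda>p. Tr_integrand (fst p) (snd p))"
proof -
  have S': "S \<subseteq> {0..1} \<times> {0..1}" using S by auto
  note G = continuous_on_compose_subst[OF phi_quot_continuous S']
    and G1 = continuous_on_compose_subst[OF dphi_quot_continuous S']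
    and ph = continuous_on_compose_subst[OF phi_continuous S']
    and D1 = continuous_on_compose_subst[OF D_continuous S']
  have Q: "continuous_on S (\<lambda>p. subst_quad (fst p) (snd p))"
    unfolding subst_quad_def by (intro continuous_intros)
  have nz: "\<forall>p\<in>S. sqrt (subst_quad (fst p) (snd p)) \<noteq> 0" "\<forall>p\<in>S. subst_quad (fst p) (snd p) \<noteq> 0"
    using S subst_quad_pos by (force, force)
  show "continuous_on S (\<lambda>p. P_integrand (fst p) (snd p))" unfolding P_integrand_def
    by (intro continuous_intros ph Q; use nz in auto)
  show "continuous_on S (\<lambda>p. dP_integrand (fst p) (snd p))" unfolding dP_integrand_def
    by (intro continuous_intros ph D1 Q; use nz in auto)
  show "continuous_on S (\<lambda>p. Pr_integrand (fst p) (snd p))" unfolding Pr_integrand_def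
    by (intro continuous_intros G Q; use nz in auto)
  show "continuous_on S (\<lambda>p. Sr_integrand (fst p) (snd p))" unfolding Sr_integrand_def
    by (intro continuous_intros G Q; use nz in auto)
  show "continuous_on S (\<lambda>p. Tr_integrand (fst p) (snd p))" unfolding Tr_integrand_def
    by (intro continuous_intros G G1 Q; use nz in auto)
qed

lemma reduced_integrals_continuous:
  "continuous_on {0..1/2} Pr" "continuous_on {0..1/2} Sr" "continuous_on {0..1/2} Tr"
  unfolding Pr_def[abs_def] Sr_def[abs_def] Tr_def[abs_def]
  by (intro continuous_on_integral_Icc_param integrands_continuous; force)+

lemma integrands_continuous_in_t:
  assumes "0 \<le> a" "a < 1"
  shows "continuous_on {0..1} (P_integrand a)" "continuous_on {0..1} (Sr_integrand a)"
  using assms by (auto intro!: continuous_on_slice[of "{a}"] integrands_continuous)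

lemma P_integrand_has_derivative:
  assumes x: "x \<in> {0<..<1}" and t: "t \<in> {0..1}"
  shows "((\<lambda>x. P_integrand x t) has_real_derivative dP_integrand x t) (at x within {0<..<1})"
proof -
  let ?U = "{0<..<1::real}" and ?s = "x * (1 - t^2)"
  have "(phi has_real_derivative D 1 ?s) (at ?s within (\<lambda>x. x * (1 - t^2)) ` ?U)"
    by (rule has_field_derivative_subset[OF phi_has_derivative])
      (use x t mult_one_minus_square_in_unit in force)+
  moreover have "((\<lambda>x. x * (1 - t^2)) has_real_derivative 1 - t^2) (at x within ?U)"
    by (rule derivative_eq_intros refl | simp)+
  ultimately have d1:
    "((\<lambda>x. phi (x * (1 - t^2))) has_real_derivative D 1 ?s * (1 - t^2)) (at x within ?U)"
    using DERIV_image_chain by (simp add: o_def)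
  have Q: "0 < subst_quad x t" using x t by (intro subst_quad_pos) auto
  have "((\<lambda>x. subst_quad x t) has_real_derivative t^2 - 2) (at x within ?U)"
    unfolding subst_quad_def by (rule derivative_eq_intros refl | simp add: algebra_simps)+
  from DERIV_chain2[OF DERIV_real_sqrt[OF Q] this] have d2:
    "((\<lambda>x. sqrt (subst_quad x t)) has_real_derivative (t^2 - 2) / (2 * sqrt (subst_quad x t)))
      (at x within ?U)"
    by (simp add: field_simps)
  have quot: "(A * r - B * (c / (2 * r))) / (r * r) = A / r - B * c / (2 * (r * r) * r)"
    if "0 < r" for A B c r :: real
    using that by (simp add: field_simps)
  have "((\<lambda>x. phi (x * (1 - t^2)) / sqrt (subst_quad x t)) has_real_derivative
      (D 1 ?s * (1 - t^2) * sqrt (subst_quad x t) - phi ?s * ((t^2 - 2) / (2 * sqrt (subst_quad x t))))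
        / (sqrt (subst_quad x t) * sqrt (subst_quad x t))) (at x within ?U)"
    by (rule DERIV_divide[OF d1 d2]) (use Q in simp)
  moreover have "(D 1 ?s * (1 - t^2) * sqrt (subst_quad x t) - phi ?s * ((t^2 - 2) / (2 * sqrt (subst_quad x t))))
        / (sqrt (subst_quad x t) * sqrt (subst_quad x t))
      = D 1 ?s * (1 - t^2) / sqrt (subst_quad x t)
        - phi ?s * (t^2 - 2) / (2 * (sqrt (subst_quad x t) * sqrt (subst_quad x t)) * sqrt (subst_quad x t))"
    by (rule quot) (use Q in simp)
  ultimately show ?thesis
    unfolding P_integrand_def dP_integrand_def using Q by (simp add: mult_ac)
qed

lemma P_has_derivative:
  assumes "0 < x" "x < 1"
  shows "(P has_real_derivative dP x) (at x)"
proof -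
  let ?U = "{0<..<1::real}"
  have "P_integrand y integrable_on cbox 0 1" if "y \<in> ?U" for y
    using that by (auto intro!: integrable_continuous_interval integrands_continuous_in_t)
  moreover have "continuous_on (?U \<times> {0..1}) (\<lambda>p. dP_integrand (fst p) (snd p))"
    by (rule integrands_continuous) auto
  then have "continuous_on (?U \<times> cbox 0 1) (\<lambda>(x, t). dP_integrand x t)"
    by (simp add: case_prod_beta')
  ultimately have "((\<lambda>x. integral (cbox 0 1) (P_integrand x)) has_field_derivative
      integral (cbox 0 1) (dP_integrand x)) (at x within ?U)"
    by (intro leibniz_rule_field_derivative P_integrand_has_derivative) (use assms in auto)
  moreover have "at x within ?U = at x" by (rule at_within_open) (use assms in auto)
  ultimately show ?thesis unfolding P_def[abs_def] dP_def by simp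
qed

lemma P_eq_power_mult_Pr:
  assumes "0 \<le> a" "a \<le> 1"
  shows "P a = a^n * Pr a"
proof -
  have "P a = integral {0..1} (\<lambda>t. a^n * Pr_integrand a t)"
    unfolding P_def
  proof (rule integral_cong)
    fix t :: real assume "t \<in> {0..1}"
    then have s: "a * (1 - t^2) \<in> {0..1}" using assms by (intro mult_one_minus_square_in_unit) auto
    show "P_integrand a t = a^n * Pr_integrand a t"
      unfolding P_integrand_def Pr_integrand_def phi_eq_power_mult_quot[OF s]
      by (simp add: power_mult_distrib)
  qed
  then show ?thesis unfolding Pr_def by simp
qed

lemma dP_eq_power_mult_Tr:
  assumes "0 \<le> a" "a \<le> 1"
  shows "a * dP a = a^n * Tr a"
proof -
  have "a * dP a = integral {0..1} (\<lambda>t. a * dP_integrand a t)" unfolding dP_def by simp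
  also have "\<dots> = integral {0..1} (\<lambda>t. a^n * Tr_integrand a t)"
  proof (rule integral_cong)
    fix t :: real assume t: "t \<in> {0..1}"
    have s: "a * (1 - t^2) \<in> {0..1}" using assms t by (intro mult_one_minus_square_in_unit) auto
    have "a * ((1 - t^2) * D 1 (a * (1 - t^2))) = a^n * ((1 - t^2)^n * dphi_quot (a * (1 - t^2)))"
      using D1_eq_power_mult_quot[OF s] by (simp add: power_mult_distrib mult.assoc)
    moreover have "phi (a * (1 - t^2)) = a^n * ((1 - t^2)^n * phi_quot (a * (1 - t^2)))"
      using phi_eq_power_mult_quot[OF s] by (simp add: power_mult_distrib mult.assoc)
    ultimately show "a * dP_integrand a t = a^n * Tr_integrand a t"
      unfolding dP_integrand_def Tr_integrand_def by (simp add: right_diff_distrib mult_ac)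
  qed
  also have "\<dots> = a^n * Tr a" unfolding Tr_def by simp
  finally show ?thesis .
qed

definition moment0 where "moment0 = integral {0..1} (\<lambda>t::real. (1 - t^2)^n)"
definition moment2 where "moment2 = integral {0..1} (\<lambda>t::real. (1 - t^2)^n * t^2)"

lemma Pr_0: "Pr 0 = phi_lead * moment0 / sqrt 2"
proof -
  have "Pr 0 = integral {0..1} (\<lambda>t. (phi_lead / sqrt 2) * (1 - t^2)^n)"
    unfolding Pr_def by (rule integral_cong) (simp add: Pr_integrand_def subst_quad_def phi_quot_def)
  then show ?thesis unfolding moment0_def by simp
qed

lemma Sr_0: "Sr 0 = phi_lead * sqrt 2 * moment2"
proof -
  have "Sr 0 = integral {0..1} (\<lambda>t. (phi_lead * sqrt 2) * ((1 - t^2)^n * t^2))"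
    unfolding Sr_def by (rule integral_cong) (simp add: Sr_integrand_def subst_quad_def phi_quot_def)
  then show ?thesis unfolding moment2_def by simp
qed

lemma Tr_0: "Tr 0 = real n * phi_lead * moment0 / sqrt 2"
proof -
  have "Tr 0 = integral {0..1} (\<lambda>t. (real n * phi_lead / sqrt 2) * (1 - t^2)^n)"
    unfolding Tr_def by (rule integral_cong) (simp add: Tr_integrand_def subst_quad_def dphi_quot_def)
  then show ?thesis unfolding moment0_def by simp
qed

lemma Pr_0_pos: "0 < Pr 0"
  unfolding Pr_0 moment0_def using phi_lead_pos integral_one_minus_square_power_pos by simp

lemma integral_minus_half_eq_P:
  assumes "0 < E0" "0 < V" "V < E0"
  shows "integral {V..E0} (\<lambda>E. Phi E0 phi E * (E\<^sup>2 / V\<^sup>2 - 1) powr (-1/2))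
    = 2 * V * sqrt (1 - V/E0) * P (1 - V/E0)"
proof -
  define a where "a = 1 - V/E0"
  have a: "0 < a" "a < 1" using subst_param_bounds[OF assms(2,3)] by (simp_all add: a_def)
  have "continuous_on {0..1} (\<lambda>t. 2 * V * sqrt a * P_integrand a t)"
    using integrands_continuous_in_t(1)[of a] a by (intro continuous_intros) auto
  then have "integral {V..E0} (\<lambda>E. Phi E0 phi E * (E\<^sup>2 / V\<^sup>2 - 1) powr (-1/2))
      = integral {0..1} (\<lambda>t. 2 * V * sqrt a * P_integrand a t)"
  proof (rule integral_substitute_square[OF \<open>V < E0\<close>])
    fix t :: real assume t: "0 < t" "t \<le> 1"
    have Q: "0 < subst_quad a t" using a t by (intro subst_quad_pos) auto
    then have "(E0 * t * sqrt a * sqrt (subst_quad a t) / V) powr (2 * (-1/2))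
        = V / (E0 * t * sqrt a * sqrt (subst_quad a t))"
      using a t assms by (simp add: powr_minus_divide)
    moreover have "2 * V * r * (p / q) = 2 * E0 * a * t * p * (V / (E0 * t * r * q))"
      if "r * r = a" "r \<noteq> 0" "q \<noteq> 0" for p q r :: real
      using that t assms by (simp add: field_simps flip: that(1))
    ultimately show "2 * V * sqrt a * P_integrand a t
        = 2 * (E0 - V) * t * (Phi E0 phi (V + (E0 - V) * t^2) * ((V + (E0 - V) * t^2)^2 / V^2 - 1) powr (-1/2))"
      unfolding Phi_kernel_substitution[OF assms a_def t(1)] P_integrand_def
      using a Q by simp
  qed
  then show ?thesis unfolding P_def a_def by simp
qed

lemma xi_minus_half_eq:
  assumes "0 < E0" "0 < V" "V < E0"
  shows "xi (-1/2) E0 phi V = 8 * pi * sqrt (1 - V/E0) * P (1 - V/E0)"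
  using assms unfolding xi_def integral_minus_half_eq_P[OF assms] by simp

lemma xi_half_eq:
  assumes "0 < E0" "0 < V" "V < E0"
  defines "a \<equiv> 1 - V/E0"
  shows "xi (1/2) E0 phi V = 8 * pi * a * sqrt a / (1 - a)^2 * (a^n * Sr a)"
proof -
  have a: "0 < a" "a < 1" using subst_param_bounds[OF assms(2,3)] by (simp_all add: a_def)
  have V: "V = E0 * (1 - a)" using assms(1) by (simp add: a_def)
  define c where "c = 2 * E0^2 * a * sqrt a / V"
  have "continuous_on {0..1} (\<lambda>t. c * (a^n * Sr_integrand a t))"
    using integrands_continuous_in_t(2)[of a] a by (intro continuous_intros) auto
  then have integral: "integral {V..E0} (\<lambda>E. Phi E0 phi E * (E\<^sup>2 / V\<^sup>2 - 1) powr (1/2))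
      = integral {0..1} (\<lambda>t. c * (a^n * Sr_integrand a t))"
  proof (rule integral_substitute_square[OF \<open>V < E0\<close>])
    fix t :: real assume t: "0 < t" "t \<le> 1"
    have "a * (1 - t^2) \<in> {0..1}" using a t by (intro mult_one_minus_square_in_unit) auto
    then have phi: "phi (a * (1 - t^2)) = a^n * (1 - t^2)^n * phi_quot (a * (1 - t^2))"
      by (simp add: phi_eq_power_mult_quot power_mult_distrib)
    have "0 < subst_quad a t" using a t by (intro subst_quad_pos) auto
    then have "(E0 * t * sqrt a * sqrt (subst_quad a t) / V) powr (2 * (1/2))
        = E0 * t * sqrt a * sqrt (subst_quad a t) / V"
      using a t assms by simp
    then show "c * (a^n * Sr_integrand a t)
        = 2 * (E0 - V) * t * (Phi E0 phi (V + (E0 - V) * t^2) * ((V + (E0 - V) * t^2)^2 / V^2 - 1) powr (1/2))"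
      unfolding Phi_kernel_substitution[OF assms(1-3) refl t(1), folded a_def] Sr_integrand_def c_def phi
      using assms(2) by (simp add: field_simps power2_eq_square)
  qed
  have factor: "4 * pi / V * c = 8 * pi * a * sqrt a / (1 - a)^2"
  proof -
    have "E0 / V = 1 / (1 - a)" using a assms(1) by (simp add: V)
    moreover have "4 * pi / V * c = 8 * pi * a * sqrt a * (E0 / V)^2"
      using assms(2) by (simp add: c_def field_simps power2_eq_square)
    ultimately show ?thesis by (simp add: power_divide)
  qed
  show ?thesis
    unfolding xi_def Sr_def integral integral_mult_right by (simp only: factor mult.assoc[symmetric])
qed

lemma integral_minus_half_has_derivative:
  assumes "0 < E0" "0 < V" "V < E0"
  defines "a \<equiv> 1 - V/E0"
  shows "((\<lambda>W. integral {W..E0} (\<lambda>E. Phi E0 phi E * (E\<^sup>2 / W\<^sup>2 - 1) powr (-1/2))) has_real_derivative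
      (2 * sqrt a - (1 - a) / sqrt a) * P a - 2 * (1 - a) * sqrt a * dP a) (at V)"
proof (rule has_field_derivative_transform_within_open)
  have a: "0 < a" "a < 1" using subst_param_bounds[OF assms(2,3)] by (simp_all add: a_def)
  have dA: "((\<lambda>W. 1 - W/E0) has_real_derivative -1/E0) (at V)"
    using assms(1) by (auto intro!: derivative_eq_intros)
  have "(P has_real_derivative dP a) (at (1 - V/E0))" using P_has_derivative a by (simp add: a_def)
  from DERIV_chain2[OF this dA] have dP: "((\<lambda>W. P (1 - W/E0)) has_real_derivative dP a * (-1/E0)) (at V)"
    by (simp add: a_def)
  have "(sqrt has_real_derivative inverse (sqrt a) / 2) (at (1 - V/E0))"
    using DERIV_real_sqrt[OF a(1)] by (simp add: a_def)
  from DERIV_chain2[OF this dA] have dS: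
    "((\<lambda>W. sqrt (1 - W/E0)) has_real_derivative inverse (sqrt a) / 2 * (-1/E0)) (at V)" .
  have "((\<lambda>W. 2 * W * sqrt (1 - W/E0) * P (1 - W/E0)) has_real_derivative
      (2 * sqrt a + inverse (sqrt a) / 2 * (-1/E0) * (2 * V)) * P a + dP a * (-1/E0) * (2 * V * sqrt a))
      (at V)"
    using DERIV_mult[OF DERIV_mult[OF DERIV_cmult[OF DERIV_ident, of 2] dS] dP] by (simp add: a_def)
  moreover have "(2 * sqrt a + inverse (sqrt a) / 2 * (-1/E0) * (2 * V)) * P a + dP a * (-1/E0) * (2 * V * sqrt a)
      = (2 * sqrt a - (1 - a) / sqrt a) * P a - 2 * (1 - a) * sqrt a * dP a"
    using assms(1) by (simp add: a_def field_simps)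
  ultimately show "((\<lambda>W. 2 * W * sqrt (1 - W/E0) * P (1 - W/E0)) has_real_derivative
      (2 * sqrt a - (1 - a) / sqrt a) * P a - 2 * (1 - a) * sqrt a * dP a) (at V)"
    by simp
  show "open {0<..<E0}" "V \<in> {0<..<E0}" using assms by auto
  show "2 * W * sqrt (1 - W/E0) * P (1 - W/E0)
      = integral {W..E0} (\<lambda>E. Phi E0 phi E * (E\<^sup>2 / W\<^sup>2 - 1) powr (-1/2))" if "W \<in> {0<..<E0}" for W
    using integral_minus_half_eq_P[OF assms(1)] that by simp
qed

lemma zeta_eq:
  assumes "0 < E0" "0 < V" "V < E0"
  defines "a \<equiv> 1 - V/E0"
  shows "zeta E0 phi V = -4 * pi * ((2 * sqrt a - (1 - a) / sqrt a) * P a - 2 * (1 - a) * sqrt a * dP a)"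
  unfolding zeta_def a_def
  using DERIV_imp_deriv[OF integral_minus_half_has_derivative[OF assms(1-3)]] by simp

definition ratio_red where
  "ratio_red a = Sr a * ((1 - 3 * a) * Pr a + 2 * (1 - a) * Tr a) / (2 * (1 - a)^2 * (Pr a)^2)"

lemma xi_ratio_eq_ratio_red:
  assumes "0 < E0" "0 < V" "V < E0" and "Pr (1 - V/E0) \<noteq> 0"
  shows "xi (1/2) E0 phi V / xi (-1/2) E0 phi V * (zeta E0 phi V / xi (-1/2) E0 phi V)
    = ratio_red (1 - V/E0)"
proof -
  define a where "a = 1 - V/E0"
  have a: "0 < a" "a < 1" using subst_param_bounds[OF assms(2,3)] by (simp_all add: a_def)
  define r where "r = sqrt a"
  have r: "0 < r" "a = r * r" using a by (simp_all add: r_def)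
  have "-4 * pi * ((2 * r - (1 - a) / r) * P a - 2 * (1 - a) * r * dP a)
      = 4 * pi / r * ((1 - 3 * a) * P a + 2 * (1 - a) * (a * dP a))"
    using r by (simp add: field_simps)
  then have zeta: "zeta E0 phi V = 4 * pi * a^n / r * ((1 - 3 * a) * Pr a + 2 * (1 - a) * Tr a)"
    using zeta_eq[OF assms(1-3)] P_eq_power_mult_Pr[of a] dP_eq_power_mult_Tr[of a] a
    unfolding a_def[symmetric] r_def[symmetric] by (simp add: algebra_simps)
  have xi_minus: "xi (-1/2) E0 phi V = 8 * pi * r * (a^n * Pr a)"
    using xi_minus_half_eq[OF assms(1-3)] P_eq_power_mult_Pr a by (simp add: a_def r_def)
  have xi_plus: "xi (1/2) E0 phi V = 8 * pi * a * r / (1 - a)^2 * (a^n * Sr a)"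
    using xi_half_eq[OF assms(1-3)] by (simp add: a_def r_def)
  have alg: "(8 * pi * a * r / b^2 * (an * S)) / (8 * pi * r * (an * p)) * ((4 * pi * an / r * X) / (8 * pi * r * (an * p)))
      = S * X / (2 * b^2 * p^2)" if "a = r * r" "0 < r" "b \<noteq> 0" "p \<noteq> 0" "an \<noteq> 0" for an b p S X
    using that by (simp add: field_simps power2_eq_square)
  then show ?thesis
    unfolding xi_minus xi_plus zeta ratio_red_def a_def[symmetric]
    using r a assms(4)[folded a_def] by (intro alg) auto
qed

lemma ratio_red_tendsto: "(ratio_red \<longlongrightarrow> (2 * real n + 1) / (2 * real n + 3)) (at_right 0)"
proof -
  have "(ratio_red \<longlongrightarrow> ratio_red 0) (at_right 0)"
    unfolding ratio_red_def[abs_def] using Pr_0_pos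
    by (intro tendsto_intros tendsto_at_right_of_continuous_on_Icc[of 0 "1/2"]
        reduced_integrals_continuous) auto
  moreover have "ratio_red 0 = (2 * real n + 1) / (2 * real n + 3)"
  proof -
    have M: "moment0 = (2 * real n + 3) * moment2" "0 < moment0"
      unfolding moment0_def moment2_def
      by (rule integral_one_minus_square_power integral_one_minus_square_power_pos)+
    have "ratio_red 0 = moment2 * (2 * real n + 1) / moment0"
      unfolding ratio_red_def Pr_0 Sr_0 Tr_0 using phi_lead_pos M(2)
      by (simp add: field_simps power2_eq_square)
    also have "\<dots> = (2 * real n + 1) / (2 * real n + 3)"
      using M by (simp add: field_simps)
    finally show ?thesis .
  qed
  ultimately show ?thesis by simp
qed

lemma xi_ratio_tendsto:
  assumes "0 < E0"
  shows "((\<lambda>V. xi (1/2) E0 phi V / xi (-1/2) E0 phi V * (zeta E0 phi V / xi (-1/2) E0 phi V))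
    \<longlongrightarrow> (2 * real n + 1) / (2 * real n + 3)) (at_left E0)"
proof -
  have "((\<lambda>V. 1 - V/E0) \<longlongrightarrow> 0) (at_left E0)"
    using assms by (intro tendsto_eq_intros) (auto intro: tendsto_ident_at)
  then have a_lim: "filterlim (\<lambda>V. 1 - V/E0) (at_right 0) (at_left E0)"
    by (rule tendsto_imp_filterlim_at_right)
      (use assms in \<open>auto simp: eventually_at_left_field field_simps intro!: exI[of _ 0]\<close>)
  have "\<forall>\<^sub>F a in at_right 0. 0 < Pr a"
    using order_tendstoD(1)[OF tendsto_at_right_of_continuous_on_Icc[OF _ reduced_integrals_continuous(1)]
        Pr_0_pos] by simp
  from eventually_compose_filterlim[OF this a_lim]
  have "\<forall>\<^sub>F V in at_left E0. ratio_red (1 - V/E0)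
      = xi (1/2) E0 phi V / xi (-1/2) E0 phi V * (zeta E0 phi V / xi (-1/2) E0 phi V)"
    using eventually_at_left_real[OF assms]
    by eventually_elim (rule xi_ratio_eq_ratio_red[symmetric]; use assms in auto)
  with filterlim_compose[OF ratio_red_tendsto a_lim] show ?thesis
    by (rule tendsto_cong[THEN iffD1, rotated])
qed

end

theorem mainTheorem8:
  fixes phi :: "real \<Rightarrow> real" and E0 :: real and n :: nat
  assumes "0 < E0"
    and "standing_assms phi n"
    and "n \<le> 3"
  shows "\<exists>\<delta>>0. \<forall>V. E0 - \<delta> < V \<and> V < E0 \<longrightarrow>
           \<bar>xi (1/2) E0 phi V / xi (-1/2) E0 phi V * (zeta E0 phi V / xi (-1/2) E0 phi V)\<bar> < 4/5"
proof -
  obtain D where "standing_phi phi n D"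
    using standing_assms_imp_standing_phi[OF assms(2)] by blast
  then interpret standing_phi phi n D .
  have "\<bar>(2 * real n + 1) / (2 * real n + 3)\<bar> < 4/5"
    using assms(3) by (simp add: divide_less_eq)
  from order_tendstoD(2)[OF tendsto_rabs[OF xi_ratio_tendsto[OF assms(1)]] this]
  obtain b where "b < E0" and b: "\<And>V. b < V \<Longrightarrow> V < E0 \<Longrightarrow>
      \<bar>xi (1/2) E0 phi V / xi (-1/2) E0 phi V * (zeta E0 phi V / xi (-1/2) E0 phi V)\<bar> < 4/5"
    unfolding eventually_at_left_field by blast
  show ?thesis
    by (rule exI[of _ "E0 - b"]) (use \<open>b < E0\<close> b in auto)
qed

end
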